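(* Fix $x\in\{0,1\}^n$ with exactly $K$ ones and fix the incidence matrix $T$. Consider a right node $k$ of the SAFFRON construction, with measurement vector $z_k$. (i) The singleton test at node $k$ declares an item if and only if node $k$ is a singleton, and in that case the declared item is the unique defective item connected to node $k$. (ii) If node $k$ is a doubleton whose two defective items are $\ell_0$ and $\ell^*$, then the doubleton test at node $k$ with respect to $\ell_0$ declares exactly the item $\ell^*$. (iii) If node $k$ is connected to $\ell_0$ and to at least two other defective items, then the probability, over the random draw of $s_1,s_2$, that the doubleton test at node $k$ with respect to $\ell_0$ declares an item that is not one of the defective items connected to node $k$ is at most $1/n^2$.
   Context: Items are indexed by $[n]=\{1,\dots,n\}$ with $n=2^L$. The unknown support vector is $x\in\{0,1\}^n$ with $x_\ell=1$ iff item $\ell$ is defective; exactly $K$ items are defective. For $\ell\in[n]$, $b_\ell\in\{0,1\}^L$ denotes the $L$-bit binary representation of $\ell-1$, and $\overline{v}$ denotes the bitwise complement of a binary vector $v$. Two sequences $s_1=(i_1,\dots,i_n)$ and $s_2=(j_1,\dots,j_n)$ are drawn independently and uniformly at random from $[n]^n$. The signature of item $\ell$ is the vector $u_\ell=(b_\ell;\overline{b_\ell};b_{i_\ell};\overline{b_{i_\ell}};b_{j_\ell};\overline{b_{j_\ell}})\in\{0,1\}^{6L}$ (vertical concatenation). A bipartite graph has $n$ left nodes (the items) and $M$ right nodes, with incidence matrix $T\in\{0,1\}^{M\times n}$ ($T_{k\ell}=1$ iff item $\ell$ is connected to right node $k$). For each right node $k$ there are $6L$ tests: the $r$-th of them pools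 exactly the items $\ell$ with $T_{k\ell}=1$ and $(u_\ell)_r=1$, and its outcome is positive iff the pool contains a defective item. Hence the measurement vector of right node $k$ is $z_k=\bigvee_{\ell:\,T_{k\ell}x_\ell=1}u_\ell\in\{0,1\}^{6L}$ (bitwise OR; the zero vector if there is no such $\ell$). Write $z_k=(z_k^1;\dots;z_k^6)$ with each section $z_k^w\in\{0,1\}^L$, and $z^w_{k,t}$ for its $t$-th bit. A right node is a singleton if it is connected to exactly one defective item and a doubleton if it is connected to exactly two defective items. Singleton test at node $k$: if the Hamming weight of $z_k$ equals $3L$, declare defective the item $\ell$ with $b_\ell=z_k^1$; otherwise declare nothing. Doubleton test at node $k$ with respect to an item $\ell_0$ (already known to be defective, with $T_{k\ell_0}=1$): set $r^1=b_{\ell_0}$, $r^2=b_{i_{\ell_0}}$, $r^3=b_{j_{\ell_0}}$; for $w=1,2,3$ and $t=1,\dots,L$ let $c^w_t=z^{2w-1}_{k,t}$ if $r^w_t=0$ and $c^w_t=1-z^{2w}_{k,t}$ if $r^w_t=1$; let $\ell_w\in[n]$ be the index with $b_{\ell_w}=c^w$. If $i_{\ell_1}=\ell_2$ and $j_{\ell_1}=\ell_3$, declare item $\ell_1$ defective; otherwise declare nothing. *)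

theory Defs
  imports "HOL-Probability.Probability"
begin

(* Items are 1..n with n = 2^L.  Binary vectors of length m are functions
   nat => bool on positions 1..m (value False outside). *)

definition bin :: "nat \<Rightarrow> nat \<Rightarrow> nat \<Rightarrow> bool" where
  "bin L l t = (t \<in> {1..L} \<and> bit (l - 1) (t - 1))"

definition seqs :: "nat \<Rightarrow> (nat \<Rightarrow> nat) set" where
  "seqs L = PiE {1..2^L} (\<lambda>_. {1..2^L})"

(* signature u_l = (b_l; ~b_l; b_{i_l}; ~b_{i_l}; b_{j_l}; ~b_{j_l}) in {0,1}^{6L};
   position r = (w-1)*L + t lies in section w, bit t *)
definition sig :: "nat \<Rightarrow> (nat \<Rightarrow> nat) \<Rightarrow> (nat \<Rightarrow> nat) \<Rightarrow> nat \<Rightarrow> nat \<Rightarrow> bool" where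
  "sig L i j l r = (r \<in> {1..6*L} \<and>
     (let w = (r - 1) div L + 1; t = (r - 1) mod L + 1 in
      if w = 1 then bin L l t
      else if w = 2 then \<not> bin L l t
      else if w = 3 then bin L (i l) t
      else if w = 4 then \<not> bin L (i l) t
      else if w = 5 then bin L (j l) t
      else \<not> bin L (j l) t))"

definition meas :: "nat \<Rightarrow> (nat \<Rightarrow> nat \<Rightarrow> bool) \<Rightarrow> (nat \<Rightarrow> bool) \<Rightarrow>
    (nat \<Rightarrow> nat) \<Rightarrow> (nat \<Rightarrow> nat) \<Rightarrow> nat \<Rightarrow> nat \<Rightarrow> bool" where
  "meas L T x i j k r = (\<exists>l\<in>{1..2^L}. T k l \<and> x l \<and> sig L i j l r)"

definition sec :: "nat \<Rightarrow> (nat \<Rightarrow> bool) \<Rightarrow> nat \<Rightarrow> nat \<Rightarrow> bool" where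
  "sec L z w t = z ((w - 1) * L + t)"

definition index_of :: "nat \<Rightarrow> (nat \<Rightarrow> bool) \<Rightarrow> nat" where
  "index_of L c = (THE l. l \<in> {1..2^L} \<and> (\<forall>t\<in>{1..L}. bin L l t = c t))"

definition defectives_at :: "nat \<Rightarrow> (nat \<Rightarrow> nat \<Rightarrow> bool) \<Rightarrow> (nat \<Rightarrow> bool) \<Rightarrow> nat \<Rightarrow> nat set" where
  "defectives_at L T x k = {l \<in> {1..2^L}. T k l \<and> x l}"

definition singleton_test :: "nat \<Rightarrow> (nat \<Rightarrow> bool) \<Rightarrow> nat option" where
  "singleton_test L z =
     (if card {r \<in> {1..6*L}. z r} = 3 * L then Some (index_of L (sec L z 1)) else None)"

definition doubleton_test :: "nat \<Rightarrow> (nat \<Rightarrow> nat) \<Rightarrow> (nat \<Rightarrow> nat) \<Rightarrow> (nat \<Rightarrow> bool) \<Rightarrow> nat \<Rightarrow> nat option" where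
  "doubleton_test L i j z l0 =
     (let r = (\<lambda>w::nat. if w = 1 then bin L l0 else if w = 2 then bin L (i l0) else bin L (j l0));
          c = (\<lambda>w t. if r w t then \<not> sec L z (2 * w) t else sec L z (2 * w - 1) t);
          l1 = index_of L (c 1); l2 = index_of L (c 2); l3 = index_of L (c 3)
      in if i l1 = l2 \<and> j l1 = l3 then Some l1 else None)"

end

theory Submission
  imports Defs
begin

text \<open>
  Section w of z_k is the bitwise OR, over the defective items l at node k, of section w of the
  signature u_l. Since sections 1 and 2 (and likewise 3, 4 and 5, 6) are complementary, each such
  pair has weight at least L, with equality exactly when all defective items agree on the
  corresponding bits; for sections 1, 2 this forces at most one defective item, as b is injective.
  Hence the weight is 3L exactly at singletons, and then section 1 is b_l.

  In the doubleton test, undoing the complement where r^w_t = 1 recovers from each pair of sections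
  the bits of the other defective item when there are exactly two. In general the decoded values
  l_1, l_2, l_3 depend only on the restrictions of i, j to the defective items; so if l_1 is not
  defective, i_{l_1} and j_{l_1} are independent of them and uniform, and both checks pass with
  probability at most 1/n^2.
\<close>

lemma bin_eq_imp_eq:
  assumes "l \<in> {1..2^L}" "l' \<in> {1..2^L}" "\<forall>t\<in>{1..L}. bin L l t = bin L l' t"
  shows "l = l'"
proof -
  have "bit (l - 1) n = bit (l' - 1) n" for n
  proof (cases "n < L")
    case True
    then have "bin L l (Suc n) = bin L l' (Suc n)" using assms(3) by simp
    then show ?thesis using True by (simp add: bin_def)
  next
    case False
    have "take_bit L (l - 1) = l - 1" "take_bit L (l' - 1) = l' - 1"
      using assms(1,2) by (auto simp: take_bit_nat_eq_self_iff)
    then show ?thesis using False by (metis bit_take_bit_iff)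
  qed
  then have "l - 1 = l' - 1" by (simp add: bit_eq_iff)
  then show ?thesis using assms(1,2) by auto
qed

lemma ex_bin_eq: "\<exists>l\<in>{1..2^L}. \<forall>t\<in>{1..L}. bin L l t = c t"
proof -
  let ?R = "\<lambda>l. restrict (bin L l) {1..L}"
  have "inj_on ?R {1..2^L}"
    by (rule inj_onI) (metis bin_eq_imp_eq restrict_apply')
  then have "card (?R ` {1..2^L}) = card (PiE {1..L} (\<lambda>_. UNIV :: bool set))"
    by (simp add: card_image card_PiE)
  moreover have "?R ` {1..2^L} \<subseteq> PiE {1..L} (\<lambda>_. UNIV)" by auto
  ultimately have "?R ` {1..2^L} = PiE {1..L} (\<lambda>_. UNIV)"
    by (intro card_subset_eq) (simp_all add: finite_PiE)
  moreover have "restrict c {1..L} \<in> PiE {1..L} (\<lambda>_. UNIV)" by simp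
  ultimately obtain l where "l \<in> {1..2^L}" "?R l = restrict c {1..L}"
    by (metis (no_types, lifting) imageE)
  then show ?thesis by (metis restrict_apply')
qed

lemma index_of_spec:
  "index_of L c \<in> {1..2^L} \<and> (\<forall>t\<in>{1..L}. bin L (index_of L c) t = c t)"
proof -
  have "\<exists>!l. l \<in> {1..2^L} \<and> (\<forall>t\<in>{1..L}. bin L l t = c t)"
    using ex_bin_eq[of L c] bin_eq_imp_eq[of _ L] by metis
  then show ?thesis unfolding index_of_def by (rule theI')
qed

lemma index_of_eqI:
  assumes "l \<in> {1..2^L}" "\<forall>t\<in>{1..L}. bin L l t = c t"
  shows "index_of L c = l"
  using index_of_spec[of L c] assms bin_eq_imp_eq[of "index_of L c" L l] by auto

lemma index_of_cong:
  assumes "\<forall>t\<in>{1..L}. c t = c' t"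
  shows "index_of L c = index_of L c'"
  using index_of_spec[of L c] index_of_eqI[of "index_of L c" L c'] assms by auto

definition sig_sec :: "nat \<Rightarrow> (nat \<Rightarrow> nat) \<Rightarrow> (nat \<Rightarrow> nat) \<Rightarrow> nat \<Rightarrow> nat \<Rightarrow> nat \<Rightarrow> bool" where
  "sig_sec L i j l w t =
     (if w = 1 then bin L l t else if w = 2 then \<not> bin L l t
      else if w = 3 then bin L (i l) t else if w = 4 then \<not> bin L (i l) t
      else if w = 5 then bin L (j l) t else \<not> bin L (j l) t)"

lemma sig_section:
  assumes t: "t \<in> {1..L}" and w: "w \<in> {1..6}"
  shows "sig L i j l ((w - 1) * L + t) = sig_sec L i j l w t"
proof -
  have "(w - 1) * L \<le> 5 * L" using w by (intro mult_le_mono1) auto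
  then have range: "(w - 1) * L + t \<in> {1..6 * L}" using t unfolding atLeastAtMost_iff by linarith
  have r: "(w - 1) * L + t - 1 = (t - 1) + (w - 1) * L" using t by auto
  have "(t - 1 + (w - 1) * L) div L = w - 1" "(t - 1 + (w - 1) * L) mod L = t - 1"
    using t by (subst div_mult_self1 mod_mult_self1; auto)+
  then have d: "((w - 1) * L + t - 1) div L + 1 = w" and m: "((w - 1) * L + t - 1) mod L + 1 = t"
    using t w by (simp_all only: r) auto
  show ?thesis using range unfolding sig_def Let_def d m sig_sec_def by simp
qed

lemma sec_meas:
  assumes "t \<in> {1..L}" "w \<in> {1..6}"
  shows "sec L (meas L T x i j k) w t = (\<exists>l\<in>defectives_at L T x k. sig_sec L i j l w t)"
  unfolding sec_def meas_def defectives_at_def using sig_section[OF assms] by auto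

lemma defectives_at_subset: "defectives_at L T x k \<subseteq> {1..2^L}"
  unfolding defectives_at_def by auto

lemma card_sections:
  "card {r \<in> {1..m * L}. z r} = (\<Sum>w = 1..m. card {t \<in> {1..L}. sec L z w t})"
proof (induction m)
  case (Suc m)
  have split: "{r \<in> {1..Suc m * L}. z r} = {r \<in> {1..m * L}. z r} \<union> (\<lambda>t. m * L + t) ` {t \<in> {1..L}. z (m * L + t)}"
  proof (intro set_eqI iffI)
    fix r assume r: "r \<in> {r \<in> {1..Suc m * L}. z r}"
    show "r \<in> {r \<in> {1..m * L}. z r} \<union> (\<lambda>t. m * L + t) ` {t \<in> {1..L}. z (m * L + t)}"
    proof (cases "r \<le> m * L")
      case False
      then show ?thesis using r by (intro UnI2 image_eqI[where x = "r - m * L"]) auto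
    qed (use r in auto)
  qed auto
  have "card {r \<in> {1..Suc m * L}. z r}
      = card {r \<in> {1..m * L}. z r} + card ((\<lambda>t. m * L + t) ` {t \<in> {1..L}. z (m * L + t)})"
    unfolding split by (rule card_Un_disjoint) auto
  also have "card ((\<lambda>t. m * L + t) ` {t \<in> {1..L}. z (m * L + t)}) = card {t \<in> {1..L}. sec L z (Suc m) t}"
    by (subst card_image) (auto simp: sec_def)
  finally show ?case using Suc.IH by simp
qed simp

lemma card_ex_plus_card_ex_not:
  assumes "D \<noteq> {}"
  shows "card {t \<in> {1..L}. \<exists>l\<in>D. P l t} + card {t \<in> {1..L}. \<exists>l\<in>D. \<not> P l t}
     = L + card {t \<in> {1..L}. \<exists>l\<in>D. \<exists>l'\<in>D. P l t \<and> \<not> P l' t}"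
proof -
  have "{t \<in> {1..L}. \<exists>l\<in>D. P l t} \<union> {t \<in> {1..L}. \<exists>l\<in>D. \<not> P l t} = {1..L}"
    using assms by auto
  moreover have "{t \<in> {1..L}. \<exists>l\<in>D. P l t} \<inter> {t \<in> {1..L}. \<exists>l\<in>D. \<not> P l t}
      = {t \<in> {1..L}. \<exists>l\<in>D. \<exists>l'\<in>D. P l t \<and> \<not> P l' t}"
    by auto
  ultimately show ?thesis
    using card_Un_Int[of "{t \<in> {1..L}. \<exists>l\<in>D. P l t}" "{t \<in> {1..L}. \<exists>l\<in>D. \<not> P l t}"] by simp
qed

definition disagreeing_bits :: "nat \<Rightarrow> nat set \<Rightarrow> (nat \<Rightarrow> nat) \<Rightarrow> nat set" where
  "disagreeing_bits L D f = {t \<in> {1..L}. \<exists>l\<in>D. \<exists>l'\<in>D. bin L (f l) t \<and> \<not> bin L (f l') t}"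

lemma card_disagreeing_bits_eq_0_iff:
  "card (disagreeing_bits L D f) = 0 \<longleftrightarrow> (\<forall>l\<in>D. \<forall>l'\<in>D. \<forall>t\<in>{1..L}. bin L (f l) t = bin L (f l') t)"
proof -
  have "finite (disagreeing_bits L D f)" unfolding disagreeing_bits_def by simp
  then have "card (disagreeing_bits L D f) = 0 \<longleftrightarrow> disagreeing_bits L D f = {}" by simp
  also have "\<dots> \<longleftrightarrow> (\<forall>l\<in>D. \<forall>l'\<in>D. \<forall>t\<in>{1..L}. bin L (f l) t = bin L (f l') t)"
    unfolding disagreeing_bits_def by blast
  finally show ?thesis .
qed

lemma weight_meas:
  assumes "defectives_at L T x k \<noteq> {}"
  shows "card {r \<in> {1..6 * L}. meas L T x i j k r}
    = 3 * L + card (disagreeing_bits L (defectives_at L T x k) id)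
        + card (disagreeing_bits L (defectives_at L T x k) i)
        + card (disagreeing_bits L (defectives_at L T x k) j)"
proof -
  let ?D = "defectives_at L T x k"
  let ?g = "\<lambda>w. card {t \<in> {1..L}. \<exists>l\<in>?D. sig_sec L i j l w t}"
  have "card {r \<in> {1..6 * L}. meas L T x i j k r} = (\<Sum>w = 1..6. ?g w)"
    unfolding card_sections by (intro sum.cong refl arg_cong[where f = card]) (auto simp: sec_meas)
  also have "\<dots> = ?g 1 + ?g 2 + ?g 3 + ?g 4 + ?g 5 + ?g 6"
    by (simp add: eval_nat_numeral)
  also have "\<dots> = 3 * L + card (disagreeing_bits L ?D id) + card (disagreeing_bits L ?D i)
      + card (disagreeing_bits L ?D j)"
    using card_ex_plus_card_ex_not[OF assms(1), of L "\<lambda>l. bin L l"]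
      card_ex_plus_card_ex_not[OF assms(1), of L "\<lambda>l. bin L (i l)"]
      card_ex_plus_card_ex_not[OF assms(1), of L "\<lambda>l. bin L (j l)"]
    by (simp add: disagreeing_bits_def sig_sec_def)
  finally show ?thesis .
qed

lemma weight_meas_eq_iff_singleton:
  assumes "L \<ge> 1"
  shows "card {r \<in> {1..6 * L}. meas L T x i j k r} = 3 * L \<longleftrightarrow> (\<exists>l. defectives_at L T x k = {l})"
proof (cases "defectives_at L T x k = {}")
  case True
  then have "\<not> meas L T x i j k r" for r
    unfolding meas_def defectives_at_def by blast
  then have "{r \<in> {1..6 * L}. meas L T x i j k r} = {}" by simp
  then have "card {r \<in> {1..6 * L}. meas L T x i j k r} \<noteq> 3 * L"
    using assms by (simp only: card.empty)
  with True show ?thesis by blast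
next
  case False
  let ?D = "defectives_at L T x k"
  note weight = weight_meas[OF False, of i j]
  show ?thesis
  proof
    assume "card {r \<in> {1..6 * L}. meas L T x i j k r} = 3 * L"
    then have "card (disagreeing_bits L ?D id) = 0" using weight by linarith
    then have "\<forall>l\<in>?D. \<forall>l'\<in>?D. \<forall>t\<in>{1..L}. bin L l t = bin L l' t"
      unfolding card_disagreeing_bits_eq_0_iff id_apply .
    then have "l = l'" if "l \<in> ?D" "l' \<in> ?D" for l l'
      using that defectives_at_subset[of L T x k] by (intro bin_eq_imp_eq) blast+
    then show "\<exists>l. ?D = {l}" using False by blast
  next
    assume "\<exists>l. ?D = {l}"
    then have "card (disagreeing_bits L ?D f) = 0" for f
      unfolding card_disagreeing_bits_eq_0_iff by fastforce
    then show "card {r \<in> {1..6 * L}. meas L T x i j k r} = 3 * L"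
      using weight by (simp only: add_0_right)
  qed
qed

lemma singleton_test_meas:
  assumes "L \<ge> 1"
  shows "singleton_test L (meas L T x i j k) = Some l \<longleftrightarrow> defectives_at L T x k = {l}"
proof -
  have "index_of L (sec L (meas L T x i j k) 1) = l" if "defectives_at L T x k = {l}" for l
    using that defectives_at_subset[of L T x k]
    by (intro index_of_eqI) (auto simp: sec_meas sig_sec_def)
  then show ?thesis
    using weight_meas_eq_iff_singleton[OF assms, of T x i j k] by (auto simp: singleton_test_def)
qed

text \<open>
  decoded L D l0 f is the vector c^w of the doubleton test for f = id, i, j (w = 1, 2, 3), when D is
  the set of defective items at the node.
\<close>

definition decoded :: "nat \<Rightarrow> nat set \<Rightarrow> nat \<Rightarrow> (nat \<Rightarrow> nat) \<Rightarrow> nat \<Rightarrow> bool" where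
  "decoded L D l0 f t = (if bin L (f l0) t then \<forall>l\<in>D. bin L (f l) t else \<exists>l\<in>D. bin L (f l) t)"

lemma doubleton_test_meas:
  "doubleton_test L i j (meas L T x i j k) l0 =
    (let D = defectives_at L T x k; l1 = index_of L (decoded L D l0 id) in
     if i l1 = index_of L (decoded L D l0 i) \<and> j l1 = index_of L (decoded L D l0 j)
     then Some l1 else None)"
proof -
  let ?z = "meas L T x i j k" and ?D = "defectives_at L T x k"
  let ?r = "\<lambda>w::nat. if w = 1 then bin L l0 else if w = 2 then bin L (i l0) else bin L (j l0)"
  let ?c = "\<lambda>w t. if ?r w t then \<not> sec L ?z (2 * w) t else sec L ?z (2 * w - 1) t"
  have "index_of L (?c 1) = index_of L (decoded L ?D l0 id)"
    "index_of L (?c 2) = index_of L (decoded L ?D l0 i)"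
    "index_of L (?c 3) = index_of L (decoded L ?D l0 j)"
    by (intro index_of_cong, simp add: sec_meas sig_sec_def decoded_def)+
  then show ?thesis unfolding doubleton_test_def Let_def by (simp only:)
qed

lemma decoded_pair: "decoded L {l0, ls} l0 f = bin L (f ls)"
  by (auto simp: decoded_def fun_eq_iff)

lemma decoded_cong:
  assumes "l0 \<in> D" "\<forall>l\<in>D. f l = g l"
  shows "decoded L D l0 f = decoded L D l0 g"
  using assms by (auto simp: decoded_def fun_eq_iff)

lemma doubleton_test_meas_pair:
  assumes "i \<in> seqs L" "j \<in> seqs L" "defectives_at L T x k = {l0, ls}"
  shows "doubleton_test L i j (meas L T x i j k) l0 = Some ls"
proof -
  have ls: "ls \<in> {1..2^L}" using defectives_at_subset[of L T x k] assms(3) by auto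
  then have "i ls \<in> {1..2^L}" "j ls \<in> {1..2^L}" using assms(1,2) by (auto simp: seqs_def)
  with ls have "index_of L (bin L ls) = ls" "index_of L (bin L (i ls)) = i ls"
    "index_of L (bin L (j ls)) = j ls"
    by (auto intro: index_of_eqI)
  then show ?thesis by (simp add: doubleton_test_meas assms(3) decoded_pair)
qed

text \<open>Redefining f at a is injective on pairs (f, v) with f a = G f, since G cannot see f a.\<close>

lemma card_PiE_eq_at_point_le:
  assumes "finite I" "finite B" "a \<in> I" "a \<notin> D"
    and G: "\<And>f g. \<forall>l\<in>D. f l = g l \<Longrightarrow> G f = G g"
  shows "card {f \<in> PiE I (\<lambda>_. B). f a = G f} * card B \<le> card (PiE I (\<lambda>_. B))"
proof -
  let ?A = "{f \<in> PiE I (\<lambda>_. B). f a = G f}"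
  have "inj_on (\<lambda>(f, v). f(a := v)) (?A \<times> B)"
  proof (rule inj_onI)
    fix p q assume "p \<in> ?A \<times> B" "q \<in> ?A \<times> B" "(\<lambda>(f, v). f(a := v)) p = (\<lambda>(f, v). f(a := v)) q"
    then obtain f v f' v' where pq: "p = (f, v)" "q = (f', v')"
      and f: "f \<in> ?A" "f' \<in> ?A" and eq: "f(a := v) = f'(a := v')"
      by (cases p, cases q) auto
    have "\<forall>l\<in>D. f l = f' l" using fun_cong[OF eq] \<open>a \<notin> D\<close> by (metis fun_upd_other)
    then have "f a = f' a" using f G by auto
    then show "p = q" using eq pq by (metis fun_upd_triv fun_upd_upd fun_upd_same)
  qed
  moreover have "(\<lambda>(f, v). f(a := v)) ` (?A \<times> B) \<subseteq> PiE I (\<lambda>_. B)"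
    using \<open>a \<in> I\<close> by (auto simp: PiE_def Pi_def extensional_def)
  ultimately have "card (?A \<times> B) \<le> card (PiE I (\<lambda>_. B))"
    using assms(1,2) by (intro card_inj_on_le) (auto simp: finite_PiE)
  then show ?thesis by (simp add: card_cartesian_product)
qed

lemma prob_pmf_of_set_square_le:
  assumes "finite S" "S \<noteq> {}" "A \<subseteq> S" "E \<inter> (S \<times> S) \<subseteq> A \<times> A" "card A * c \<le> card S" "c > 0"
  shows "measure_pmf.prob (pmf_of_set (S \<times> S)) E \<le> 1 / real c ^ 2"
proof -
  have S: "card S > 0" using assms(1,2) by (simp add: card_gt_0_iff)
  have "card ((S \<times> S) \<inter> E) \<le> card (A \<times> A)"
    using assms(1,3,4) by (intro card_mono) (auto intro: finite_subset)
  then have "real (card ((S \<times> S) \<inter> E)) / real (card (S \<times> S))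
      \<le> real (card A * card A) / real (card S * card S)"
    using S by (simp add: card_cartesian_product divide_right_mono del: of_nat_mult)
  also have "\<dots> = (real (card A) / real (card S)) ^ 2" by (simp add: power2_eq_square)
  also have "\<dots> \<le> (1 / real c) ^ 2"
    using assms(6) S of_nat_mono[OF assms(5)] by (intro power_mono) (auto simp: field_simps)
  finally show ?thesis using assms(1,2) by (simp add: measure_pmf_of_set power_divide)
qed

lemma prob_doubleton_test_meas_not_defective:
  assumes l0: "l0 \<in> defectives_at L T x k"
  shows "measure_pmf.prob (pmf_of_set (seqs L \<times> seqs L))
           {(i, j). \<exists>l. doubleton_test L i j (meas L T x i j k) l0 = Some l \<and> l \<notin> defectives_at L T x k}
         \<le> 1 / (real (2^L))^2"
    (is "measure_pmf.prob _ ?E \<le> _")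
proof -
  let ?D = "defectives_at L T x k"
  define F where "F f = index_of L (decoded L ?D l0 f)" for f
  define A where "A = {i \<in> seqs L. i (F id) = F i}"
  have E: "?E \<subseteq> {(i, j). F id \<notin> ?D \<and> i (F id) = F i \<and> j (F id) = F j}"
    by (auto simp: doubleton_test_meas Let_def F_def split: if_splits)
  show ?thesis
  proof (cases "F id \<in> ?D")
    case True
    then have "?E = {}" using E by blast
    then show ?thesis by (simp only:) simp
  next
    case False
    have "card A * card {1..2^L::nat} \<le> card (seqs L)"
      unfolding A_def seqs_def
    proof (rule card_PiE_eq_at_point_le)
      show "F id \<in> {1..2^L}" using index_of_spec by (auto simp: F_def)
      show "F f = F g" if "\<forall>l\<in>?D. f l = g l" for f g
        using decoded_cong[OF l0 that] by (simp add: F_def)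
    qed (use False in simp_all)
    moreover have "?E \<inter> (seqs L \<times> seqs L) \<subseteq> A \<times> A"
      using E unfolding A_def by auto
    moreover have "finite (seqs L)" "seqs L \<noteq> {}"
      by (auto simp: seqs_def finite_PiE PiE_eq_empty_iff)
    moreover have "A \<subseteq> seqs L" by (simp add: A_def)
    ultimately show ?thesis using prob_pmf_of_set_square_le[of "seqs L" A ?E "2^L"] by simp
  qed
qed

theorem lemma1:
  fixes L K M k :: nat and T :: "nat \<Rightarrow> nat \<Rightarrow> bool" and x :: "nat \<Rightarrow> bool"
  assumes "L \<ge> 1"
    and "card {l \<in> {1..2^L}. x l} = K"
    and "k \<in> {1..M}"
  shows
   "(\<forall>i j. i \<in> seqs L \<longrightarrow> j \<in> seqs L \<longrightarrow>
       (\<forall>l. singleton_test L (meas L T x i j k) = Some l \<longleftrightarrow> defectives_at L T x k = {l}))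
    \<and>
    (\<forall>i j l0 ls. i \<in> seqs L \<longrightarrow> j \<in> seqs L \<longrightarrow> l0 \<noteq> ls \<longrightarrow>
       defectives_at L T x k = {l0, ls} \<longrightarrow>
       doubleton_test L i j (meas L T x i j k) l0 = Some ls)
    \<and>
    (\<forall>l0. l0 \<in> defectives_at L T x k \<longrightarrow> card (defectives_at L T x k - {l0}) \<ge> 2 \<longrightarrow>
       measure_pmf.prob (pmf_of_set (seqs L \<times> seqs L))
         {(i, j). \<exists>l. doubleton_test L i j (meas L T x i j k) l0 = Some l \<and>
                      l \<notin> defectives_at L T x k}
       \<le> 1 / (real (2^L))^2)"
proof (intro conjI allI impI)
  fix i j l
  show "singleton_test L (meas L T x i j k) = Some l \<longleftrightarrow> defectives_at L T x k = {l}"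
    by (rule singleton_test_meas[OF assms(1)])
next
  fix i j l0 ls
  assume "i \<in> seqs L" "j \<in> seqs L" "defectives_at L T x k = {l0, ls}"
  then show "doubleton_test L i j (meas L T x i j k) l0 = Some ls"
    by (rule doubleton_test_meas_pair)
next
  fix l0
  assume "l0 \<in> defectives_at L T x k"
  then show "measure_pmf.prob (pmf_of_set (seqs L \<times> seqs L))
      {(i, j). \<exists>l. doubleton_test L i j (meas L T x i j k) l0 = Some l \<and> l \<notin> defectives_at L T x k}
    \<le> 1 / (real (2^L))^2"
    by (rule prob_doubleton_test_meas_not_defective)
qed

end
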